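(* Let $n\ge1$ and let $\mathcal{A},\mathcal{B}\subseteq D_n$. Then $\mathcal{A}$ and $\mathcal{B}$ are right-homometric if and only if $$\mathbf{iv}(A_+)+\mathbf{iv}(A_-)=\mathbf{iv}(B_+)+\mathbf{iv}(B_-)\quad\text{and}\quad \mathbf{ifunc}(A_+,A_-)=\mathbf{ifunc}(B_+,B_-).$$ Moreover, $\mathcal{A}$ and $\mathcal{B}$ are left-homometric if and only if $$\mathbf{iv}(A_+)+\mathbf{iv}(A_-)=\mathbf{iv}(B_+)+\mathbf{iv}(B_-)\quad\text{and}\quad \mathbf{ifunc}(I_0A_+,A_-)=\mathbf{ifunc}(I_0B_+,B_-).$$ (All equalities are equalities of functions $\mathbb{Z}_n\to\mathbb{Z}_{\ge0}$.)
   Context: $D_n$ is the set of pairs $(k,\epsilon)$, $k\in\mathbb{Z}_n$, $\epsilon\in\{1,-1\}$, with multiplication $(k,\epsilon)(l,\eta)=(k+\epsilon l,\epsilon\eta)$. Right interval: ${}^r\mathbf{int}(x,y)=x^{-1}y$, i.e. ${}^r\mathbf{int}((k_1,\epsilon_1),(k_2,\epsilon_2))=((k_2-k_1)/\epsilon_1,\epsilon_2/\epsilon_1)$; left interval: ${}^l\mathbf{int}(x,y)=yx^{-1}$, i.e. $(k_2-(\epsilon_2/\epsilon_1)k_1,\epsilon_2/\epsilon_1)$. For $\mathcal{A}\subseteq D_n$ and $g\in D_n$, ${}^r\mathbf{iv}(\mathcal{A})(g)=\#\{(x,y)\in\mathcal{A}^2: {}^r\mathbf{int}(x,y)=g\}$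 and ${}^l\mathbf{iv}(\mathcal{A})(g)=\#\{(x,y)\in\mathcal{A}^2:{}^l\mathbf{int}(x,y)=g\}$. Two subsets of $D_n$ are right-homometric (resp. left-homometric) if they have the same ${}^r\mathbf{iv}$ (resp. ${}^l\mathbf{iv}$). For $\mathcal{A}\subseteq D_n$ put $A_+=\{k\in\mathbb{Z}_n:(k,1)\in\mathcal{A}\}$ and $A_-=\{k\in\mathbb{Z}_n:(k,-1)\in\mathcal{A}\}$ (similarly $B_\pm$ for $\mathcal{B}$). For $A,B\subseteq\mathbb{Z}_n$: $\mathbf{ifunc}(A,B)(k)=\#\{(a,b)\in A\times B: b-a=k\}$, $\mathbf{iv}(A)=\mathbf{ifunc}(A,A)$, and $I_0A=\{-a:a\in A\}$. *)

theory Defs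
  imports Main
begin

definition Zn :: "int \<Rightarrow> int set" where
  "Zn n = {0..<n}"

definition Dn :: "int \<Rightarrow> (int \<times> int) set" where
  "Dn n = {0..<n} \<times> {1, -1}"

definition dmult :: "int \<Rightarrow> int \<times> int \<Rightarrow> int \<times> int \<Rightarrow> int \<times> int" where
  "dmult n x y = ((fst x + snd x * fst y) mod n, snd x * snd y)"

definition dinv :: "int \<Rightarrow> int \<times> int \<Rightarrow> int \<times> int" where
  "dinv n x = ((- (snd x * fst x)) mod n, snd x)"

definition rint :: "int \<Rightarrow> int \<times> int \<Rightarrow> int \<times> int \<Rightarrow> int \<times> int" where
  "rint n x y = dmult n (dinv n x) y"

definition lint :: "int \<Rightarrow> int \<times> int \<Rightarrow> int \<times> int \<Rightarrow> int \<times> int" where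
  "lint n x y = dmult n y (dinv n x)"

definition riv :: "int \<Rightarrow> (int \<times> int) set \<Rightarrow> int \<times> int \<Rightarrow> nat" where
  "riv n A g = card {(x, y). x \<in> A \<and> y \<in> A \<and> rint n x y = g}"

definition liv :: "int \<Rightarrow> (int \<times> int) set \<Rightarrow> int \<times> int \<Rightarrow> nat" where
  "liv n A g = card {(x, y). x \<in> A \<and> y \<in> A \<and> lint n x y = g}"

definition right_homometric :: "int \<Rightarrow> (int \<times> int) set \<Rightarrow> (int \<times> int) set \<Rightarrow> bool" where
  "right_homometric n A B \<longleftrightarrow> (\<forall>g \<in> Dn n. riv n A g = riv n B g)"

definition left_homometric :: "int \<Rightarrow> (int \<times> int) set \<Rightarrow> (int \<times> int) set \<Rightarrow> bool" where
  "left_homometric n A B \<longleftrightarrow> (\<forall>g \<in> Dn n. liv n A g = liv n B g)"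

definition plus_part :: "(int \<times> int) set \<Rightarrow> int set" where
  "plus_part A = {k. (k, 1) \<in> A}"

definition minus_part :: "(int \<times> int) set \<Rightarrow> int set" where
  "minus_part A = {k. (k, -1) \<in> A}"

definition ifunc :: "int \<Rightarrow> int set \<Rightarrow> int set \<Rightarrow> int \<Rightarrow> nat" where
  "ifunc n A B k = card {(a, b). a \<in> A \<and> b \<in> B \<and> (b - a) mod n = k}"

definition iv :: "int \<Rightarrow> int set \<Rightarrow> int \<Rightarrow> nat" where
  "iv n A = ifunc n A A"

definition I0 :: "int \<Rightarrow> int set \<Rightarrow> int set" where
  "I0 n A = (\<lambda>a. (- a) mod n) ` A"

end

theory Submission
  imports Defs
begin

text \<open>Every element of \<open>D\<^sub>n\<close> has sign \<open>\<plusminus>1\<close> and the sign of \<open>x\<^sup>-\<^sup>1y\<close> or \<open>yx\<^sup>-\<^sup>1\<close> is the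
  product of the signs of \<open>x\<close> and \<open>y\<close>. So the values of the interval vectors at rotations
  \<open>(k,1)\<close> count the pairs of equal sign, giving \<open>iv(A\<^sub>+) + iv(A\<^sub>-)\<close>, and the values at
  reflections \<open>(k,-1)\<close> count the pairs of opposite sign. For \<open>x = (a,1)\<close> and \<open>y = (b,-1)\<close>
  both orders of the pair contribute equally, and \<open>x\<^sup>-\<^sup>1y = (b-a,-1)\<close> while \<open>yx\<^sup>-\<^sup>1 = (b+a,-1)\<close>;
  this yields \<open>2 ifunc(A\<^sub>+,A\<^sub>-)\<close> on the right and \<open>2 ifunc(I\<^sub>0A\<^sub>+,A\<^sub>-)\<close> on the left.\<close>

lemma finite_Dn: "finite (Dn n)"
  by (simp add: Dn_def)

lemma snd_image_Dn_subset: "snd ` Dn n \<subseteq> {1, -1}"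
  by (auto simp: Dn_def)

lemma plus_part_subset_Zn: "A \<subseteq> Dn n \<Longrightarrow> plus_part A \<subseteq> Zn n"
  by (auto simp: plus_part_def Dn_def Zn_def)

lemma ball_Dn: "(\<forall>g \<in> Dn n. P g) \<longleftrightarrow> (\<forall>k \<in> Zn n. P (k, 1)) \<and> (\<forall>k \<in> Zn n. P (k, -1))"
  by (auto simp: Dn_def Zn_def)

lemma rint_eq: "rint n (a, s) (b, t) = ((s * (b - a)) mod n, s * t)"
proof -
  have "(- (s * a) mod n + s * b) mod n = (- (s * a) + s * b) mod n"
    by (rule mod_add_left_eq)
  then show ?thesis
    by (simp add: rint_def dmult_def dinv_def right_diff_distrib)
qed

lemma lint_eq: "lint n (a, s) (b, t) = ((b - t * s * a) mod n, t * s)"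
proof -
  have "(b + t * (- (s * a) mod n)) mod n = (b + t * (- (s * a))) mod n"
    by (metis mod_add_right_eq mod_mult_right_eq)
  then show ?thesis
    by (simp add: lint_def dmult_def dinv_def algebra_simps)
qed

lemma card_pairs_by_signs:
  fixes A :: "('a \<times> int) set" and P :: "'a \<times> int \<Rightarrow> 'a \<times> int \<Rightarrow> bool"
  assumes "finite A" and "snd ` A \<subseteq> {1, -1}"
  shows "card {(x, y). x \<in> A \<and> y \<in> A \<and> P x y}
       = (\<Sum>s\<in>{1, -1}. \<Sum>t\<in>{1, -1}. card {(a, b). (a, s) \<in> A \<and> (b, t) \<in> A \<and> P (a, s) (b, t)})"
proof -
  let ?S = "{(x, y). x \<in> A \<and> y \<in> A \<and> P x y}"
  let ?signs = "\<lambda>(x, y). (snd x, snd y)"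
  have "finite ?S"
    by (rule finite_subset[of _ "A \<times> A"]) (use assms(1) in auto)
  moreover have "?signs ` ?S \<subseteq> {1, -1} \<times> {1, -1}"
    using assms(2) by auto
  ultimately have "card ?S = (\<Sum>(s, t)\<in>{1, -1} \<times> {1, -1}. card {p \<in> ?S. ?signs p = (s, t)})"
    using sum.group[of ?S "{1, -1} \<times> {1, -1}" ?signs "\<lambda>_. 1 :: nat"]
    by (simp add: case_prod_unfold)
  also have "\<dots> = (\<Sum>s\<in>{1, -1}. \<Sum>t\<in>{1, -1}. card {p \<in> ?S. ?signs p = (s, t)})"
    by (simp add: sum.cartesian_product)
  also have "\<dots> = (\<Sum>s\<in>{1, -1}. \<Sum>t\<in>{1, -1}. card {(a, b). (a, s) \<in> A \<and> (b, t) \<in> A \<and> P (a, s) (b, t)})"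
  proof (intro sum.cong refl)
    fix s t :: int
    let ?embed = "\<lambda>(a, b). ((a, s), (b, t))"
    let ?piece = "{(a, b). (a, s) \<in> A \<and> (b, t) \<in> A \<and> P (a, s) (b, t)}"
    have "{p \<in> ?S. ?signs p = (s, t)} = ?embed ` ?piece"
      by auto
    moreover have "inj_on ?embed ?piece"
      by (auto simp: inj_on_def)
    ultimately show "card {p \<in> ?S. ?signs p = (s, t)} = card ?piece"
      by (simp only: card_image)
  qed
  finally show ?thesis .
qed

lemma card_pairs_swap: "card {(a, b). P a b} = card {(a, b). P b a}"
  using card_inverse[of "{(a, b). P a b}"] by (simp add: converse_def)

lemma card_pairs_Dn_by_signs:
  assumes "A \<subseteq> Dn n"
  shows "card {(x, y). x \<in> A \<and> y \<in> A \<and> P x y}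
       = (\<Sum>s\<in>{1, -1}. \<Sum>t\<in>{1, -1}. card {(a, b). (a, s) \<in> A \<and> (b, t) \<in> A \<and> P (a, s) (b, t)})"
  by (rule card_pairs_by_signs)
    (use assms finite_subset[OF assms finite_Dn] snd_image_Dn_subset in blast)+

lemma neg_mod_inj_on_Zn: "inj_on (\<lambda>a. (- a) mod n) (Zn n)"
proof (rule inj_onI)
  fix a a' assume "a \<in> Zn n" "a' \<in> Zn n" and "(- a) mod n = (- a') mod n"
  then have "(- ((- a) mod n)) mod n = (- ((- a') mod n)) mod n"
    by simp
  then have "a mod n = a' mod n"
    by (simp add: mod_minus_eq)
  with \<open>a \<in> Zn n\<close> \<open>a' \<in> Zn n\<close> show "a = a'"
    by (simp add: Zn_def)
qed

lemma ifunc_I0: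
  assumes "X \<subseteq> Zn n"
  shows "ifunc n (I0 n X) Y k = card {(a, b). a \<in> X \<and> b \<in> Y \<and> (a + b) mod n = k}"
proof -
  let ?neg = "map_prod (\<lambda>a. (- a) mod n) id"
  let ?S = "{(a, b). a \<in> X \<and> b \<in> Y \<and> (a + b) mod n = k}"
  have shift: "(b - (- a) mod n) mod n = (a + b) mod n" for a b :: int
    by (simp add: mod_diff_right_eq add.commute)
  have "{(a', b). a' \<in> I0 n X \<and> b \<in> Y \<and> (b - a') mod n = k} = ?neg ` ?S"
  proof (intro set_eqI iffI)
    fix p assume "p \<in> {(a', b). a' \<in> I0 n X \<and> b \<in> Y \<and> (b - a') mod n = k}"
    then obtain a b where "p = ?neg (a, b)" and "(a, b) \<in> ?S"
      by (auto simp: I0_def shift)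
    then show "p \<in> ?neg ` ?S"
      by (rule image_eqI)
  qed (auto simp: I0_def shift)
  moreover have "inj_on ?neg ?S"
  proof (rule inj_on_subset)
    show "inj_on ?neg (X \<times> Y)"
      using inj_on_subset[OF neg_mod_inj_on_Zn assms] by (rule map_prod_inj_on) simp
  qed auto
  ultimately show ?thesis
    by (simp add: ifunc_def card_image)
qed

lemma riv_rotation:
  assumes "A \<subseteq> Dn n"
  shows "riv n A (k, 1) = iv n (plus_part A) k + iv n (minus_part A) k"
proof -
  have "riv n A (k, 1) = iv n (plus_part A) k
      + card {(a, b). (a, -1) \<in> A \<and> (b, -1) \<in> A \<and> (a - b) mod n = k}"
    unfolding riv_def card_pairs_Dn_by_signs[OF assms]
    by (simp add: rint_eq iv_def ifunc_def plus_part_def)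
  also have "card {(a, b). (a, -1) \<in> A \<and> (b, -1) \<in> A \<and> (a - b) mod n = k} = iv n (minus_part A) k"
    by (subst card_pairs_swap) (simp add: iv_def ifunc_def minus_part_def conj_ac)
  finally show ?thesis .
qed

lemma riv_reflection:
  assumes "A \<subseteq> Dn n"
  shows "riv n A (k, -1) = 2 * ifunc n (plus_part A) (minus_part A) k"
proof -
  have "riv n A (k, -1) = ifunc n (plus_part A) (minus_part A) k
      + card {(a, b). (a, -1) \<in> A \<and> (b, 1) \<in> A \<and> (a - b) mod n = k}"
    unfolding riv_def card_pairs_Dn_by_signs[OF assms]
    by (simp add: rint_eq ifunc_def plus_part_def minus_part_def)
  also have "card {(a, b). (a, -1) \<in> A \<and> (b, 1) \<in> A \<and> (a - b) mod n = k}
      = ifunc n (plus_part A) (minus_part A) k"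
    by (subst card_pairs_swap) (simp add: ifunc_def plus_part_def minus_part_def conj_ac)
  finally show ?thesis by simp
qed

lemma liv_rotation:
  assumes "A \<subseteq> Dn n"
  shows "liv n A (k, 1) = iv n (plus_part A) k + iv n (minus_part A) k"
  unfolding liv_def card_pairs_Dn_by_signs[OF assms]
  by (simp add: lint_eq iv_def ifunc_def plus_part_def minus_part_def)

lemma liv_reflection:
  assumes "A \<subseteq> Dn n"
  shows "liv n A (k, -1) = 2 * ifunc n (I0 n (plus_part A)) (minus_part A) k"
proof -
  let ?sums = "card {(a, b). a \<in> plus_part A \<and> b \<in> minus_part A \<and> (a + b) mod n = k}"
  have "liv n A (k, -1) = ?sums + card {(a, b). (a, -1) \<in> A \<and> (b, 1) \<in> A \<and> (a + b) mod n = k}"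
    unfolding liv_def card_pairs_Dn_by_signs[OF assms]
    by (simp add: lint_eq plus_part_def minus_part_def add.commute)
  also have "card {(a, b). (a, -1) \<in> A \<and> (b, 1) \<in> A \<and> (a + b) mod n = k} = ?sums"
    by (subst card_pairs_swap) (simp add: plus_part_def minus_part_def conj_ac add.commute)
  also have "?sums = ifunc n (I0 n (plus_part A)) (minus_part A) k"
    using ifunc_I0[OF plus_part_subset_Zn[OF assms]] by simp
  finally show ?thesis by simp
qed

theorem mainTheorem2:
  fixes n :: int and A B :: "(int \<times> int) set"
  assumes "n \<ge> 1" and "A \<subseteq> Dn n" and "B \<subseteq> Dn n"
  shows "(right_homometric n A B \<longleftrightarrow>
            (\<forall>k \<in> Zn n. iv n (plus_part A) k + iv n (minus_part A) k
                        = iv n (plus_part B) k + iv n (minus_part B) k)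
          \<and> (\<forall>k \<in> Zn n. ifunc n (plus_part A) (minus_part A) k
                        = ifunc n (plus_part B) (minus_part B) k))
       \<and> (left_homometric n A B \<longleftrightarrow>
            (\<forall>k \<in> Zn n. iv n (plus_part A) k + iv n (minus_part A) k
                        = iv n (plus_part B) k + iv n (minus_part B) k)
          \<and> (\<forall>k \<in> Zn n. ifunc n (I0 n (plus_part A)) (minus_part A) k
                        = ifunc n (I0 n (plus_part B)) (minus_part B) k))"
  unfolding right_homometric_def left_homometric_def ball_Dn
  using assms(2,3)
  by (simp add: riv_rotation riv_reflection liv_rotation liv_reflection)

end
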